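(* For every integer $n \ge 7$, the integer $\left\lfloor n^2/5 \right\rfloor$ is composite. *)

theory Defs
  imports Complex_Main "HOL-Computational_Algebra.Primes"
begin

definition composite :: "int \<Rightarrow> bool" where
  "composite m \<longleftrightarrow> m > 1 \<and> \<not> prime m"

end

theory Submission
  imports Defs
begin

text \<open>Write \<open>n = 5k + r\<close> with \<open>|r| \<le> 2\<close>. Since \<open>0 \<le> r\<^sup>2 < 5\<close>, the floor of \<open>n\<^sup>2/5\<close> is
  \<open>k (5k + 2r)\<close>, and for \<open>n \<ge> 8\<close> both factors are at least 2. The remaining case
  \<open>n = 7\<close> gives \<open>9 = 3 \<cdot> 3\<close>.\<close>

lemma composite_mult:
  fixes a b :: int
  assumes "a \<ge> 2" "b \<ge> 2"
  shows "composite (a * b)"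
proof -
  have "a * b \<ge> 2 * 2"
    using assms by (intro mult_mono) auto
  moreover have "\<not> prime (a * b)"
  proof
    assume "prime (a * b)"
    then have "is_unit a \<or> is_unit b"
      by (metis prime_def prime_elem_imp_irreducible irreducibleD)
    then show False
      using assms by auto
  qed
  ultimately show ?thesis
    unfolding composite_def by auto
qed

lemma square_div_of_small_offset:
  fixes m k r :: int
  assumes "r\<^sup>2 < m"
  shows "(m * k + r)\<^sup>2 div m = k * (m * k + 2 * r)"
proof -
  have "(m * k + r)\<^sup>2 = k * (m * k + 2 * r) * m + r\<^sup>2"
    by (simp add: power2_eq_square algebra_simps)
  moreover have "r\<^sup>2 div m = 0"
    using assms by (simp add: div_pos_pos_trivial)
  moreover have "m > 0"
    using assms zero_le_power2[of r] by linarith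
  ultimately show ?thesis
    by simp
qed

lemma centered_residue_mod_5:
  fixes n :: int
  obtains k r where "n = 5 * k + r" "\<bar>r\<bar> \<le> 2"
proof
  show "n = 5 * ((n + 2) div 5) + (n - 5 * ((n + 2) div 5))"
    by simp
  show "\<bar>n - 5 * ((n + 2) div 5)\<bar> \<le> 2"
    using pos_mod_bound[of 5 "n + 2"] pos_mod_sign[of 5 "n + 2"]
    by (simp add: minus_div_mult_eq_mod [symmetric])
qed

theorem mainTheorem1:
  fixes n :: int
  assumes "n \<ge> 7"
  shows "composite (floor ((real_of_int n)^2 / 5))"
proof -
  have floor_eq: "floor ((real_of_int n)^2 / 5) = n\<^sup>2 div 5"
    by (metis floor_divide_of_int_eq of_int_numeral of_int_power)
  show ?thesis
  proof (cases "n = 7")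
    case True
    then have "n\<^sup>2 div 5 = 3 * 3"
      by simp
    then show ?thesis
      using floor_eq composite_mult[of 3 3] by simp
  next
    case False
    obtain k r where n: "n = 5 * k + r" and r: "\<bar>r\<bar> \<le> 2"
      by (rule centered_residue_mod_5)
    have "r\<^sup>2 < 5"
      using r power2_le_iff_abs_le[of 2 r] by simp
    then have "n\<^sup>2 div 5 = k * (5 * k + 2 * r)"
      unfolding n by (rule square_div_of_small_offset)
    moreover have "composite (k * (5 * k + 2 * r))"
      using assms False n r by (intro composite_mult) linarith+
    ultimately show ?thesis
      using floor_eq by simp
  qed
qed

end
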